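(* Assume $\mathcal E=\emptyset$, $K$ has nonempty interior, and all $f_i$ ($i=1,\ldots,m$) and $-c_j$ ($j\in\mathcal I$) are SOS-convex polynomials. Let $d$ be the maximum degree of the $f_i$ and $d_0=\max\{\lceil d/2\rceil,\ \lceil\deg(c_j)/2\rceil\ (j\in\mathcal I)\}$. Then the interior of $\mathcal U$ equals $$\mathcal V_1=\Big\{(v_1,\ldots,v_m):\ \exists\, y\in\mathbb R^{\mathbb N^n_{2d_0}} \text{ with } y_0=1,\ M_{d_0}[y]\succeq 0,\ \langle c_j,y\rangle\ge0\ (j\in\mathcal I),\ v_i>\langle f_i,y\rangle\ (i\in[m])\Big\}.$$ Moreover, a vector $v\in f(K)$ is a weakly Pareto value if and only if it lies on the boundary of the closure of $\mathcal V_1$.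
   Context: $f_1,\ldots,f_m,c_j$ ($j\in\mathcal I$) are real polynomials in $x\in\mathbb R^n$, $K=\{x: c_j(x)\ge0\ (j\in\mathcal I)\}$, $\mathcal U=f(K)+\mathbb R^m_+$ where $f=(f_1,\ldots,f_m)$. A point $x^*\in K$ is weakly Pareto if no $x\in K$ has $f_i(x)<f_i(x^* )$ for all $i$; a weakly Pareto value is $f(x^* )$ for such $x^*$. A polynomial $p$ is SOS-convex if its Hessian satisfies $\nabla^2p(x)=Q(x)^TQ(x)$ for some matrix polynomial $Q$. For $y=(y_\alpha)_{\alpha\in\mathbb N^n_{2k}}$ (with $\mathbb N^n_{t}=\{\alpha\in\mathbb N^n:|\alpha|\le t\}$) and polynomial $p=\sum p_\alpha x^\alpha$ of degree $\le 2k$, $\langle p,y\rangle=\sum_\alpha p_\alpha y_\alpha$; $y_0$ is the entry at $\alpha=0$; the moment matrix $M_k[y]$ is the symmetric matrix indexed by $\alpha,\beta\in\mathbb N^n_k$ with $(\alpha,\beta)$ entry $y_{\alpha+\beta}$. $[m]=\{1,\ldots,m\}$. *)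

theory Defs
  imports "HOL-Analysis.Analysis"
begin

text \<open>Multivariate real polynomials in the variables x $ i (i :: 'n, a finite index type,
so x ranges over R^n with n = CARD('n)) are represented by their coefficient functions
on multi-indices alpha :: 'n => nat, required to have finite support.\<close>

type_synonym 'n mpoly_coeffs = "('n \<Rightarrow> nat) \<Rightarrow> real"

definition is_poly :: "'n mpoly_coeffs \<Rightarrow> bool" where
  "is_poly p \<longleftrightarrow> finite {\<alpha>. p \<alpha> \<noteq> 0}"

definition mdeg :: "('n::finite \<Rightarrow> nat) \<Rightarrow> nat" where
  "mdeg \<alpha> = (\<Sum>i\<in>UNIV. \<alpha> i)"

definition monom_eval :: "('n::finite \<Rightarrow> nat) \<Rightarrow> real^'n \<Rightarrow> real" where
  "monom_eval \<alpha> x = (\<Prod>i\<in>UNIV. (x $ i) ^ (\<alpha> i))"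

definition peval :: "('n::finite) mpoly_coeffs \<Rightarrow> real^'n \<Rightarrow> real" where
  "peval p x = (\<Sum>\<alpha>\<in>{\<alpha>. p \<alpha> \<noteq> 0}. p \<alpha> * monom_eval \<alpha> x)"

text \<open>Total degree (the zero polynomial gets degree 0).\<close>
definition pdeg :: "('n::finite) mpoly_coeffs \<Rightarrow> nat" where
  "pdeg p = Max (insert 0 (mdeg ` {\<alpha>. p \<alpha> \<noteq> 0}))"

definition pdiff :: "'n \<Rightarrow> 'n mpoly_coeffs \<Rightarrow> 'n mpoly_coeffs" where
  "pdiff i p = (\<lambda>\<alpha>. real (\<alpha> i + 1) * p (\<alpha>(i := \<alpha> i + 1)))"

definition sos_convex :: "('n::finite) mpoly_coeffs \<Rightarrow> bool" where
  "sos_convex p \<longleftrightarrow> (\<exists>(r::nat) (Q :: nat \<Rightarrow> 'n \<Rightarrow> 'n mpoly_coeffs).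
      (\<forall>k<r. \<forall>i. is_poly (Q k i)) \<and>
      (\<forall>x i j. peval (pdiff i (pdiff j p)) x = (\<Sum>k<r. peval (Q k i) x * peval (Q k j) x)))"

definition mindices :: "nat \<Rightarrow> ('n::finite \<Rightarrow> nat) set" where
  "mindices t = {\<alpha>. mdeg \<alpha> \<le> t}"

definition riesz :: "('n::finite) mpoly_coeffs \<Rightarrow> (('n \<Rightarrow> nat) \<Rightarrow> real) \<Rightarrow> real" where
  "riesz p y = (\<Sum>\<alpha>\<in>{\<alpha>. p \<alpha> \<noteq> 0}. p \<alpha> * y \<alpha>)"

text \<open>M_k[y] positive semidefinite (symmetric matrix indexed by N^n_k with entries y_(alpha+beta)).\<close>
definition moment_psd :: "nat \<Rightarrow> (('n::finite \<Rightarrow> nat) \<Rightarrow> real) \<Rightarrow> bool" where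
  "moment_psd k y \<longleftrightarrow> (\<forall>u :: ('n \<Rightarrow> nat) \<Rightarrow> real.
      (\<Sum>\<alpha>\<in>mindices k. \<Sum>\<beta>\<in>mindices k. u \<alpha> * u \<beta> * y (\<lambda>i. \<alpha> i + \<beta> i)) \<ge> 0)"

definition fmap :: "('m \<Rightarrow> ('n::finite) mpoly_coeffs) \<Rightarrow> real^'n \<Rightarrow> real^'m" where
  "fmap f x = (\<chi> i. peval (f i) x)"

definition feasible :: "'j set \<Rightarrow> ('j \<Rightarrow> ('n::finite) mpoly_coeffs) \<Rightarrow> (real^'n) set" where
  "feasible I c = {x. \<forall>j\<in>I. peval (c j) x \<ge> 0}"

definition upset :: "('m \<Rightarrow> ('n::finite) mpoly_coeffs) \<Rightarrow> (real^'n) set \<Rightarrow> (real^'m) set" where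
  "upset f K = {v. \<exists>x\<in>K. \<forall>i. fmap f x $ i \<le> v $ i}"

definition weakly_pareto :: "('m \<Rightarrow> ('n::finite) mpoly_coeffs) \<Rightarrow> (real^'n) set \<Rightarrow> real^'n \<Rightarrow> bool" where
  "weakly_pareto f K xs \<longleftrightarrow> xs \<in> K \<and>
     \<not> (\<exists>x\<in>K. \<forall>i. peval (f i) x < peval (f i) xs)"

definition weakly_pareto_value :: "('m \<Rightarrow> ('n::finite) mpoly_coeffs) \<Rightarrow> (real^'n) set \<Rightarrow> real^'m \<Rightarrow> bool" where
  "weakly_pareto_value f K v \<longleftrightarrow> (\<exists>xs. weakly_pareto f K xs \<and> v = fmap f xs)"

definition dmax :: "('m::finite \<Rightarrow> ('n::finite) mpoly_coeffs) \<Rightarrow> nat" where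
  "dmax f = Max (range (\<lambda>i. pdeg (f i)))"

definition d0 :: "('m::finite \<Rightarrow> ('n::finite) mpoly_coeffs) \<Rightarrow> 'j set \<Rightarrow> ('j \<Rightarrow> 'n mpoly_coeffs) \<Rightarrow> nat" where
  "d0 f I c = Max (insert ((dmax f + 1) div 2) ((\<lambda>j. (pdeg (c j) + 1) div 2) ` I))"

definition V1 :: "('m::finite \<Rightarrow> ('n::finite) mpoly_coeffs) \<Rightarrow> 'j set \<Rightarrow> ('j \<Rightarrow> 'n mpoly_coeffs) \<Rightarrow> (real^'m) set" where
  "V1 f I c = {v. \<exists>y :: ('n \<Rightarrow> nat) \<Rightarrow> real.
      y (\<lambda>_. 0) = 1 \<and> moment_psd (d0 f I c) y \<and>
      (\<forall>j\<in>I. riesz (c j) y \<ge> 0) \<and>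
      (\<forall>i. v $ i > riesz (f i) y)}"

end

theory Submission
  imports Defs
begin

text \<open>For a moment vector \<open>y\<close> feasible in \<open>V1\<close>, the point \<open>u\<close> of its first moments satisfies
  Jensen's inequality \<open>p(u) \<le> \<langle>p, y\<rangle>\<close> for every SOS-convex \<open>p\<close> of degree at most \<open>2 d0\<close>:
  along the segments \<open>u + t (x - u)\<close> the second derivative of \<open>p\<close> is a sum of squares of
  polynomials of degree at most \<open>d0\<close>, on which \<open>y\<close> is nonnegative. Applied to the \<open>f\<^sub>i\<close> and
  \<open>-c\<^sub>j\<close> this makes \<open>u\<close> feasible with \<open>f(u) < v\<close>; conversely the moments of the Dirac measure
  at a feasible \<open>x\<close> lie in \<open>V1\<close>. Hence \<open>V1\<close> is the open set \<open>{v. \<exists>x\<in>K. f(x) < v}\<close>, which is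
  the interior of \<open>U\<close>. Being convex and open, it is the interior of its closure, so a value
  \<open>f(x)\<close> lies on the boundary of the closure exactly when it is not strictly dominated.\<close>

section \<open>Monomials\<close>

lemma finite_mindices: "finite (mindices k :: ('n::finite \<Rightarrow> nat) set)"
proof -
  have "mindices k \<subseteq> Pi\<^sub>E UNIV (\<lambda>_::'n. {..k})"
  proof
    fix \<alpha> :: "'n \<Rightarrow> nat" assume "\<alpha> \<in> mindices k"
    moreover have "\<alpha> i \<le> mdeg \<alpha>" for i
      unfolding mdeg_def by (rule member_le_sum) auto
    ultimately show "\<alpha> \<in> Pi\<^sub>E UNIV (\<lambda>_. {..k})"
      by (auto simp: mindices_def PiE_UNIV_domain intro: le_trans)
  qed
  moreover have "finite (Pi\<^sub>E (UNIV::'n set) (\<lambda>_. {..k}))" by (rule finite_PiE) auto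
  ultimately show ?thesis by (rule finite_subset)
qed

lemma mindices_mono: "a \<le> b \<Longrightarrow> mindices a \<subseteq> mindices b"
  by (auto simp: mindices_def)

lemma zero_in_mindices [simp]: "(\<lambda>_. 0) \<in> mindices k"
  by (simp add: mindices_def mdeg_def)

lemma mindices_0: "mindices 0 = {\<lambda>_. 0}"
  by (auto simp: mindices_def mdeg_def)

lemma mdeg_add: "mdeg (\<lambda>i. \<alpha> i + \<beta> i) = mdeg \<alpha> + mdeg \<beta>"
  by (simp add: mdeg_def sum.distrib)

lemma add_in_mindices: "\<alpha> \<in> mindices a \<Longrightarrow> \<beta> \<in> mindices b \<Longrightarrow> (\<lambda>i. \<alpha> i + \<beta> i) \<in> mindices (a + b)"
  by (simp add: mindices_def mdeg_add)

lemma monom_eval_zero [simp]: "monom_eval (\<lambda>_. 0) x = 1"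
  by (simp add: monom_eval_def)

lemma monom_eval_add: "monom_eval (\<lambda>i. \<alpha> i + \<beta> i) x = monom_eval \<alpha> x * monom_eval \<beta> x"
  by (simp add: monom_eval_def power_add prod.distrib)

lemma monom_eval_scaleR: "monom_eval \<alpha> (c *\<^sub>R x) = c ^ mdeg \<alpha> * monom_eval \<alpha> x"
  by (simp add: monom_eval_def mdeg_def power_mult_distrib prod.distrib power_sum)

definition unit_mindex :: "'n \<Rightarrow> ('n \<Rightarrow> nat)" where
  "unit_mindex j = (\<lambda>i. if i = j then 1 else 0)"

lemma monom_eval_unit_mindex: "monom_eval (unit_mindex j) x = x $ j"
proof -
  have "(\<Prod>i\<in>UNIV. x $ i ^ unit_mindex j i) = (\<Prod>i\<in>{j}. x $ i ^ unit_mindex j i)"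
    by (rule prod.mono_neutral_right) (auto simp: unit_mindex_def)
  thus ?thesis by (simp add: monom_eval_def unit_mindex_def)
qed

lemma mdeg_unit_mindex: "mdeg (unit_mindex j :: 'n::finite \<Rightarrow> nat) = 1"
proof -
  have "(\<Sum>i\<in>UNIV. unit_mindex j i) = (\<Sum>i\<in>{j}. unit_mindex j i)"
    by (rule sum.mono_neutral_right) (auto simp: unit_mindex_def)
  thus ?thesis by (simp add: mdeg_def unit_mindex_def)
qed

lemma unit_mindex_in_mindices: "1 \<le> k \<Longrightarrow> unit_mindex j \<in> mindices k"
  by (simp add: mindices_def mdeg_unit_mindex)

lemma mdeg_fun_upd_Suc: "mdeg (\<alpha>(i := \<alpha> i + 1)) = mdeg \<alpha> + 1"
proof -
  have "\<alpha>(i := \<alpha> i + 1) = (\<lambda>l. \<alpha> l + unit_mindex i l)"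
    by (auto simp: unit_mindex_def)
  thus ?thesis by (simp add: mdeg_add mdeg_unit_mindex)
qed

lemma monom_eval_split: "monom_eval \<beta> z = z $ j ^ \<beta> j * (\<Prod>l\<in>UNIV - {j}. z $ l ^ \<beta> l)"
proof -
  have "monom_eval \<beta> z = (\<Prod>l\<in>insert j (UNIV - {j}). z $ l ^ \<beta> l)"
    by (simp add: monom_eval_def insert_absorb)
  thus ?thesis by (subst (asm) prod.insert) auto
qed

definition coord_upd :: "real^'n \<Rightarrow> 'n \<Rightarrow> real \<Rightarrow> real^'n" where
  "coord_upd x j t = (\<chi> i. if i = j then t else x $ i)"

lemma monom_eval_coord_upd:
  "monom_eval \<alpha> (coord_upd x j t) = t ^ \<alpha> j * monom_eval (\<alpha>(j := 0)) x"
proof -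
  have "monom_eval \<alpha> (coord_upd x j t) = t ^ \<alpha> j * (\<Prod>l\<in>UNIV - {j}. x $ l ^ \<alpha> l)"
    by (subst monom_eval_split[of _ _ j]) (auto simp: coord_upd_def intro!: prod.cong)
  moreover have "monom_eval (\<alpha>(j := 0)) x = (\<Prod>l\<in>UNIV - {j}. x $ l ^ \<alpha> l)"
    by (subst monom_eval_split[of _ _ j]) (auto intro!: prod.cong)
  ultimately show ?thesis by simp
qed

text \<open>Grouped by the exponent of \<open>x $ j\<close>, the vanishing sum is a univariate polynomial in
  \<open>x $ j\<close> that vanishes identically, so each group vanishes.\<close>

lemma monom_sum_slice_eq_0:
  fixes a :: "('n::finite \<Rightarrow> nat) \<Rightarrow> real"
  assumes A: "finite A" and zero: "\<And>x. (\<Sum>\<beta>\<in>A. a \<beta> * monom_eval \<beta> x) = 0"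
  shows "(\<Sum>\<beta>\<in>{\<beta>\<in>A. \<beta> j = e}. a \<beta> * monom_eval (\<beta>(j := 0)) x) = 0"
proof -
  define N where "N = (\<Sum>\<beta>\<in>A. \<beta> j)"
  have le_N: "\<beta> j \<le> N" if "\<beta> \<in> A" for \<beta>
    unfolding N_def by (rule member_le_sum[OF that _ A]) simp
  define B where "B e = (\<Sum>\<beta>\<in>{\<beta>\<in>A. \<beta> j = e}. a \<beta> * monom_eval (\<beta>(j := 0)) x)" for e
  have "\<forall>t. (\<Sum>e\<le>N. B e * t ^ e) = 0"
  proof
    fix t
    have "(\<Sum>e\<le>N. B e * t ^ e)
        = (\<Sum>e\<le>N. \<Sum>\<beta>\<in>{\<beta>\<in>A. \<beta> j = e}. a \<beta> * monom_eval \<beta> (coord_upd x j t))"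
      unfolding B_def sum_distrib_right
      by (intro sum.cong refl) (auto simp: monom_eval_coord_upd mult_ac)
    also have "\<dots> = (\<Sum>\<beta>\<in>A. a \<beta> * monom_eval \<beta> (coord_upd x j t))"
      by (rule sum.group) (use A le_N in auto)
    finally show "(\<Sum>e\<le>N. B e * t ^ e) = 0" using zero by simp
  qed
  hence "\<forall>e\<le>N. B e = 0" by (simp only: polyfun_eq_0)
  moreover have "B e = 0" if "N < e"
    unfolding B_def using le_N that by (intro sum.neutral) fastforce
  ultimately show ?thesis unfolding B_def by (meson not_le)
qed

lemma monom_coeffs_eq_0_aux:
  fixes S :: "'n::finite set" and a :: "('n \<Rightarrow> nat) \<Rightarrow> real"
  assumes "finite S" "finite A" "\<forall>\<beta>\<in>A. \<forall>i. i \<notin> S \<longrightarrow> \<beta> i = 0"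
    and "\<And>x. (\<Sum>\<beta>\<in>A. a \<beta> * monom_eval \<beta> x) = 0" and "\<alpha> \<in> A"
  shows "a \<alpha> = 0"
  using assms
proof (induction S arbitrary: A a \<alpha> rule: finite_induct)
  case empty
  hence "A = {\<lambda>_. 0}" by (auto intro!: ext)
  thus ?case using empty.prems(3)[of 0] empty.prems(4) by simp
next
  case (insert j S)
  define e where "e = \<alpha> j"
  define A' where "A' = (\<lambda>\<beta>. \<beta>(j := 0)) ` {\<beta>\<in>A. \<beta> j = e}"
  have "inj_on (\<lambda>\<beta>. \<beta>(j := 0)) {\<beta>\<in>A. \<beta> j = e}"
    by (rule inj_onI) (metis (mono_tags, lifting) fun_upd_triv fun_upd_upd mem_Collect_eq)
  hence "(\<Sum>\<gamma>\<in>A'. a (\<gamma>(j := e)) * monom_eval \<gamma> x)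
      = (\<Sum>\<beta>\<in>{\<beta>\<in>A. \<beta> j = e}. a \<beta> * monom_eval (\<beta>(j := 0)) x)" for x
    unfolding A'_def by (subst sum.reindex) (auto intro!: sum.cong)
  hence sum_A': "(\<Sum>\<gamma>\<in>A'. a (\<gamma>(j := e)) * monom_eval \<gamma> x) = 0" for x
    using monom_sum_slice_eq_0[OF insert.prems(1,3)] by simp
  have "finite A'" "\<forall>\<gamma>\<in>A'. \<forall>i. i \<notin> S \<longrightarrow> \<gamma> i = 0" "\<alpha>(j := 0) \<in> A'"
    using insert.prems by (auto simp: A'_def e_def)
  from insert.IH[OF this(1,2) sum_A' this(3)] have "a ((\<alpha>(j := 0))(j := e)) = 0" .
  thus ?case by (simp add: e_def)
qed

lemma monom_coeffs_eq_0:
  fixes A :: "('n::finite \<Rightarrow> nat) set"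
  assumes "finite A" "\<And>x. (\<Sum>\<beta>\<in>A. a \<beta> * monom_eval \<beta> x) = 0" "\<alpha> \<in> A"
  shows "a \<alpha> = 0"
  by (rule monom_coeffs_eq_0_aux[of UNIV]) (use assms in auto)

section \<open>Polynomial functions and the Riesz functional\<close>

text \<open>The coefficients chosen by \<open>SOME\<close> in \<open>riesz_fn\<close> are unique by the linear independence of
  monomials, so \<open>riesz_fn k y\<close> is the linear functional \<open>x\<^sup>\<alpha> \<mapsto> y\<^sub>\<alpha>\<close> on \<open>polys_le k\<close>.\<close>

definition polys_le :: "nat \<Rightarrow> (real^'n::finite \<Rightarrow> real) set" where
  "polys_le k = {g. \<exists>a. g = (\<lambda>x. \<Sum>\<alpha>\<in>mindices k. a \<alpha> * monom_eval \<alpha> x)}"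

definition riesz_fn :: "nat \<Rightarrow> (('n::finite \<Rightarrow> nat) \<Rightarrow> real) \<Rightarrow> (real^'n \<Rightarrow> real) \<Rightarrow> real" where
  "riesz_fn k y g = (\<Sum>\<alpha>\<in>mindices k.
      (SOME a. g = (\<lambda>x. \<Sum>\<alpha>\<in>mindices k. a \<alpha> * monom_eval \<alpha> x)) \<alpha> * y \<alpha>)"

lemma polys_leI: "g = (\<lambda>x. \<Sum>\<alpha>\<in>mindices k. a \<alpha> * monom_eval \<alpha> x) \<Longrightarrow> g \<in> polys_le k"
  unfolding polys_le_def by blast

lemma polys_leE:
  assumes "g \<in> polys_le k"
  obtains a where "g = (\<lambda>x. \<Sum>\<alpha>\<in>mindices k. a \<alpha> * monom_eval \<alpha> x)"
  using assms unfolding polys_le_def by blast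

lemma polys_le_coeffs_unique:
  assumes "(\<lambda>x. \<Sum>\<alpha>\<in>mindices k. a \<alpha> * monom_eval \<alpha> x) = (\<lambda>x. \<Sum>\<alpha>\<in>mindices k. b \<alpha> * monom_eval \<alpha> x)"
    and "\<alpha> \<in> mindices k"
  shows "a \<alpha> = b \<alpha>"
proof -
  have "(\<Sum>\<alpha>\<in>mindices k. (a \<alpha> - b \<alpha>) * monom_eval \<alpha> x) = 0" for x
    using fun_cong[OF assms(1), of x] by (simp add: left_diff_distrib sum_subtractf)
  from monom_coeffs_eq_0[OF finite_mindices this assms(2)] show ?thesis by simp
qed

lemma riesz_fn_eq: "riesz_fn k y (\<lambda>x. \<Sum>\<alpha>\<in>mindices k. a \<alpha> * monom_eval \<alpha> x) = (\<Sum>\<alpha>\<in>mindices k. a \<alpha> * y \<alpha>)"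
proof -
  let ?P = "\<lambda>b. (\<lambda>x. \<Sum>\<alpha>\<in>mindices k. a \<alpha> * monom_eval \<alpha> x) = (\<lambda>x. \<Sum>\<alpha>\<in>mindices k. b \<alpha> * monom_eval \<alpha> x)"
  have "?P (Eps ?P)" by (rule someI[of ?P a]) (rule refl)
  hence "Eps ?P \<alpha> = a \<alpha>" if "\<alpha> \<in> mindices k" for \<alpha>
    using polys_le_coeffs_unique[OF _ that] by simp
  thus ?thesis unfolding riesz_fn_def by (intro sum.cong refl) simp
qed

lemma sum_regroup_mindices:
  fixes c :: "'i \<Rightarrow> real" and g :: "('n::finite \<Rightarrow> nat) \<Rightarrow> real"
  assumes "finite F" "\<gamma> ` F \<subseteq> mindices k"
  shows "(\<Sum>i\<in>F. c i * g (\<gamma> i)) = (\<Sum>\<alpha>\<in>mindices k. (\<Sum>i\<in>{i\<in>F. \<gamma> i = \<alpha>}. c i) * g \<alpha>)"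
proof -
  have "(\<Sum>\<alpha>\<in>mindices k. (\<Sum>i\<in>{i\<in>F. \<gamma> i = \<alpha>}. c i) * g \<alpha>)
      = (\<Sum>\<alpha>\<in>mindices k. \<Sum>i\<in>{i\<in>F. \<gamma> i = \<alpha>}. c i * g (\<gamma> i))"
    by (auto simp: sum_distrib_right intro!: sum.cong)
  also have "\<dots> = (\<Sum>i\<in>F. c i * g (\<gamma> i))"
    by (rule sum.group) (use assms finite_mindices in auto)
  finally show ?thesis ..
qed

lemma polys_le_comb:
  assumes "finite F" "\<gamma> ` F \<subseteq> mindices k"
  shows "(\<lambda>x. \<Sum>i\<in>F. c i * monom_eval (\<gamma> i) x) \<in> polys_le k"
  by (rule polys_leI, rule ext, rule sum_regroup_mindices[OF assms])

lemma riesz_fn_comb: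
  assumes "finite F" "\<gamma> ` F \<subseteq> mindices k"
  shows "riesz_fn k y (\<lambda>x. \<Sum>i\<in>F. c i * monom_eval (\<gamma> i) x) = (\<Sum>i\<in>F. c i * y (\<gamma> i))"
proof -
  have "(\<lambda>x. \<Sum>i\<in>F. c i * monom_eval (\<gamma> i) x)
      = (\<lambda>x. \<Sum>\<alpha>\<in>mindices k. (\<Sum>i\<in>{i\<in>F. \<gamma> i = \<alpha>}. c i) * monom_eval \<alpha> x)"
    by (rule ext, rule sum_regroup_mindices[OF assms])
  thus ?thesis by (simp add: riesz_fn_eq sum_regroup_mindices[OF assms, of c y])
qed

lemma polys_le_add_coeffs:
  assumes "g = (\<lambda>x. \<Sum>\<alpha>\<in>mindices k. a \<alpha> * monom_eval \<alpha> x)"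
    and "h = (\<lambda>x. \<Sum>\<alpha>\<in>mindices k. b \<alpha> * monom_eval \<alpha> x)"
  shows "(\<lambda>x. g x + h x) = (\<lambda>x. \<Sum>\<alpha>\<in>mindices k. (a \<alpha> + b \<alpha>) * monom_eval \<alpha> x)"
  unfolding assms by (simp add: sum.distrib distrib_right)

lemma polys_le_add: "g \<in> polys_le k \<Longrightarrow> h \<in> polys_le k \<Longrightarrow> (\<lambda>x. g x + h x) \<in> polys_le k"
  by (elim polys_leE) (rule polys_leI, rule polys_le_add_coeffs)

lemma riesz_fn_add:
  assumes "g \<in> polys_le k" "h \<in> polys_le k"
  shows "riesz_fn k y (\<lambda>x. g x + h x) = riesz_fn k y g + riesz_fn k y h"
proof -
  obtain a b where g: "g = (\<lambda>x. \<Sum>\<alpha>\<in>mindices k. a \<alpha> * monom_eval \<alpha> x)"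
    and h: "h = (\<lambda>x. \<Sum>\<alpha>\<in>mindices k. b \<alpha> * monom_eval \<alpha> x)"
    using assms by (auto elim!: polys_leE)
  have "riesz_fn k y (\<lambda>x. g x + h x) = (\<Sum>\<alpha>\<in>mindices k. (a \<alpha> + b \<alpha>) * y \<alpha>)"
    unfolding polys_le_add_coeffs[OF g h] by (rule riesz_fn_eq)
  thus ?thesis unfolding g h riesz_fn_eq by (simp add: sum.distrib distrib_right)
qed

lemma polys_le_cmult_coeffs:
  assumes "g = (\<lambda>x. \<Sum>\<alpha>\<in>mindices k. a \<alpha> * monom_eval \<alpha> x)"
  shows "(\<lambda>x. r * g x) = (\<lambda>x. \<Sum>\<alpha>\<in>mindices k. (r * a \<alpha>) * monom_eval \<alpha> x)"
  unfolding assms by (simp add: sum_distrib_left mult.assoc)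

lemma polys_le_cmult: "g \<in> polys_le k \<Longrightarrow> (\<lambda>x. r * g x) \<in> polys_le k"
  by (elim polys_leE) (rule polys_leI, rule polys_le_cmult_coeffs)

lemma riesz_fn_cmult:
  assumes "g \<in> polys_le k"
  shows "riesz_fn k y (\<lambda>x. r * g x) = r * riesz_fn k y g"
proof -
  obtain a where g: "g = (\<lambda>x. \<Sum>\<alpha>\<in>mindices k. a \<alpha> * monom_eval \<alpha> x)"
    using assms by (auto elim!: polys_leE)
  have "riesz_fn k y (\<lambda>x. r * g x) = (\<Sum>\<alpha>\<in>mindices k. (r * a \<alpha>) * y \<alpha>)"
    unfolding polys_le_cmult_coeffs[OF g] by (rule riesz_fn_eq)
  thus ?thesis unfolding g riesz_fn_eq by (simp add: sum_distrib_left mult.assoc)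
qed

lemma polys_le_const: "(\<lambda>x. r) \<in> polys_le k"
  using polys_le_comb[of "{()}" "\<lambda>_. \<lambda>_. 0" k "\<lambda>_. r"] by simp

lemma riesz_fn_const: "riesz_fn k y (\<lambda>x. r) = r * y (\<lambda>_. 0)"
  using riesz_fn_comb[of "{()}" "\<lambda>_. \<lambda>_. 0" k y "\<lambda>_. r"] by simp

lemma polys_le_sum:
  "finite S \<Longrightarrow> (\<And>i. i \<in> S \<Longrightarrow> g i \<in> polys_le k) \<Longrightarrow> (\<lambda>x. \<Sum>i\<in>S. g i x) \<in> polys_le k"
  by (induction S rule: finite_induct) (auto intro: polys_le_const polys_le_add)

lemma riesz_fn_sum:
  "finite S \<Longrightarrow> (\<And>i. i \<in> S \<Longrightarrow> g i \<in> polys_le k) \<Longrightarrow>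
   riesz_fn k y (\<lambda>x. \<Sum>i\<in>S. g i x) = (\<Sum>i\<in>S. riesz_fn k y (g i))"
proof (induction S rule: finite_induct)
  case empty
  show ?case using riesz_fn_const[of k y 0] by simp
next
  case (insert a F)
  thus ?case by (simp add: riesz_fn_add polys_le_sum)
qed

lemma polys_le_coord: "1 \<le> k \<Longrightarrow> (\<lambda>x. x $ j) \<in> polys_le k"
  using polys_le_comb[of "{()}" "\<lambda>_. unit_mindex j" k "\<lambda>_. 1"]
  by (simp add: unit_mindex_in_mindices monom_eval_unit_mindex)

lemma riesz_fn_coord: "1 \<le> k \<Longrightarrow> riesz_fn k y (\<lambda>x. x $ j) = y (unit_mindex j)"
  using riesz_fn_comb[of "{()}" "\<lambda>_. unit_mindex j" k y "\<lambda>_. 1"]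
  by (simp add: unit_mindex_in_mindices monom_eval_unit_mindex)

lemma polys_le_mono:
  assumes "a \<le> b" "g \<in> polys_le a"
  shows "g \<in> polys_le b"
proof -
  obtain c where g: "g = (\<lambda>x. \<Sum>\<alpha>\<in>mindices a. c \<alpha> * monom_eval \<alpha> x)"
    using assms(2) by (rule polys_leE)
  show ?thesis unfolding g
    by (rule polys_le_comb[where \<gamma>="\<lambda>\<alpha>. \<alpha>", simplified])
      (use finite_mindices mindices_mono[OF assms(1)] in auto)
qed

lemma polys_le_mult:
  assumes "g \<in> polys_le a" "h \<in> polys_le b"
  shows "(\<lambda>x. g x * h x) \<in> polys_le (a + b)"
proof -
  obtain c d where g: "g = (\<lambda>x. \<Sum>\<alpha>\<in>mindices a. c \<alpha> * monom_eval \<alpha> x)"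
    and h: "h = (\<lambda>x. \<Sum>\<alpha>\<in>mindices b. d \<alpha> * monom_eval \<alpha> x)"
    using assms by (auto elim!: polys_leE)
  have "(\<lambda>x. g x * h x) = (\<lambda>x. \<Sum>q\<in>mindices a \<times> mindices b.
          (c (fst q) * d (snd q)) * monom_eval (\<lambda>i. fst q i + snd q i) x)"
    unfolding g h sum_product sum.cartesian_product
    by (simp add: monom_eval_add mult_ac case_prod_beta)
  also have "\<dots> \<in> polys_le (a + b)"
    by (rule polys_le_comb) (auto simp: finite_mindices intro: add_in_mindices)
  finally show ?thesis .
qed

lemma riesz_fn_square_nonneg:
  assumes "moment_psd d y" "s \<in> polys_le d"
  shows "riesz_fn (2 * d) y (\<lambda>x. s x * s x) \<ge> 0"
proof -
  obtain c where s: "s = (\<lambda>x. \<Sum>\<alpha>\<in>mindices d. c \<alpha> * monom_eval \<alpha> x)"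
    using assms by (auto elim!: polys_leE)
  have "(\<lambda>x. s x * s x) = (\<lambda>x. \<Sum>q\<in>mindices d \<times> mindices d.
          (c (fst q) * c (snd q)) * monom_eval (\<lambda>i. fst q i + snd q i) x)"
    unfolding s sum_product sum.cartesian_product
    by (simp add: monom_eval_add mult_ac case_prod_beta)
  hence "riesz_fn (2 * d) y (\<lambda>x. s x * s x)
      = (\<Sum>q\<in>mindices d \<times> mindices d. (c (fst q) * c (snd q)) * y (\<lambda>i. fst q i + snd q i))"
    by (simp add: riesz_fn_comb finite_mindices add_in_mindices mult_2 image_subset_iff)
  also have "\<dots> = (\<Sum>\<alpha>\<in>mindices d. \<Sum>\<beta>\<in>mindices d. c \<alpha> * c \<beta> * y (\<lambda>i. \<alpha> i + \<beta> i))"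
    by (simp add: sum.cartesian_product case_prod_beta)
  also have "\<dots> \<ge> 0" using assms(1) unfolding moment_psd_def by blast
  finally show ?thesis .
qed

lemma riesz_fn_sos_nonneg:
  fixes s :: "nat \<Rightarrow> real^'n::finite \<Rightarrow> real"
  assumes "moment_psd d y" "\<And>k. k < r \<Longrightarrow> s k \<in> polys_le d"
  shows "riesz_fn (2 * d) y (\<lambda>x. \<Sum>k<r. s k x * s k x) \<ge> 0"
proof -
  have "riesz_fn (2 * d) y (\<lambda>x. \<Sum>k<r. s k x * s k x) = (\<Sum>k<r. riesz_fn (2 * d) y (\<lambda>x. s k x * s k x))"
    using polys_le_mult[OF assms(2) assms(2)] by (subst riesz_fn_sum) (auto simp: mult_2)
  also have "\<dots> \<ge> 0"
    by (intro sum_nonneg) (simp add: riesz_fn_square_nonneg[OF assms(1) assms(2)])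
  finally show ?thesis .
qed

lemma riesz_fn_centered_linear:
  assumes k: "1 \<le> k" and y0: "y (\<lambda>_. 0) = 1"
  shows "riesz_fn k y (\<lambda>x. \<Sum>i\<in>UNIV. a i * (x $ i - y (unit_mindex i))) = 0"
proof -
  have "(\<lambda>x. \<Sum>i\<in>UNIV. a i * (x $ i - y (unit_mindex i)))
      = (\<lambda>x. \<Sum>i\<in>UNIV. a i * x $ i + - (a i * y (unit_mindex i)))"
    by (simp add: algebra_simps)
  hence "riesz_fn k y (\<lambda>x. \<Sum>i\<in>UNIV. a i * (x $ i - y (unit_mindex i)))
      = (\<Sum>i\<in>UNIV. riesz_fn k y (\<lambda>x. a i * x $ i + - (a i * y (unit_mindex i))))"
    by (simp only:) (rule riesz_fn_sum, simp, intro polys_le_add polys_le_cmult polys_le_coord polys_le_const k)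
  also have "\<dots> = (\<Sum>i\<in>UNIV. a i * y (unit_mindex i) + - (a i * y (unit_mindex i)) * y (\<lambda>_. 0))"
    by (intro sum.cong refl, subst riesz_fn_add)
      (auto intro!: polys_le_cmult polys_le_coord polys_le_const k simp: riesz_fn_const
        riesz_fn_cmult[OF polys_le_coord[OF k]] riesz_fn_coord[OF k])
  also have "\<dots> = 0" by (simp add: y0)
  finally show ?thesis .
qed

lemma supp_subset_mindices_pdeg: "is_poly p \<Longrightarrow> {\<alpha>. p \<alpha> \<noteq> 0} \<subseteq> mindices (pdeg p)"
  unfolding is_poly_def pdeg_def mindices_def by (auto intro!: Max_ge)

lemma peval_eq_sum_mindices:
  assumes "is_poly p" "{\<alpha>. p \<alpha> \<noteq> 0} \<subseteq> mindices k"
  shows "peval p = (\<lambda>x. \<Sum>\<alpha>\<in>mindices k. p \<alpha> * monom_eval \<alpha> x)"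
  unfolding peval_def
  by (intro ext sum.mono_neutral_left) (use assms finite_mindices in auto)

lemma riesz_eq_sum_mindices:
  assumes "is_poly p" "{\<alpha>. p \<alpha> \<noteq> 0} \<subseteq> mindices k"
  shows "riesz p y = (\<Sum>\<alpha>\<in>mindices k. p \<alpha> * y \<alpha>)"
  unfolding riesz_def by (rule sum.mono_neutral_left) (use assms finite_mindices in auto)

lemma peval_in_polys_le: "is_poly p \<Longrightarrow> {\<alpha>. p \<alpha> \<noteq> 0} \<subseteq> mindices k \<Longrightarrow> peval p \<in> polys_le k"
  by (rule polys_leI) (rule peval_eq_sum_mindices)

lemma riesz_fn_peval: "is_poly p \<Longrightarrow> {\<alpha>. p \<alpha> \<noteq> 0} \<subseteq> mindices k \<Longrightarrow> riesz_fn k y (peval p) = riesz p y"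
  by (simp add: peval_eq_sum_mindices riesz_eq_sum_mindices riesz_fn_eq)

section \<open>Polynomials along segments\<close>

definition tpolys_le :: "nat \<Rightarrow> (real \<Rightarrow> real^'n::finite \<Rightarrow> real) set" where
  "tpolys_le K = {G. \<exists>F c. finite F \<and> snd ` F \<subseteq> mindices K \<and>
      G = (\<lambda>t x. \<Sum>q\<in>F. c q * t ^ fst q * monom_eval (snd q) x)}"

lemma tpolys_leI:
  "finite F \<Longrightarrow> snd ` F \<subseteq> mindices K \<Longrightarrow>
   G = (\<lambda>t x. \<Sum>q\<in>F. c q * t ^ fst q * monom_eval (snd q) x) \<Longrightarrow> G \<in> tpolys_le K"
  unfolding tpolys_le_def by blast

lemma tpolys_leE:
  assumes "G \<in> tpolys_le K"
  obtains F c where "finite F" "snd ` F \<subseteq> mindices K"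
    "G = (\<lambda>t x. \<Sum>q\<in>F. c q * t ^ fst q * monom_eval (snd q) x)"
  using assms unfolding tpolys_le_def by blast

lemma tpolys_le_comb:
  assumes "finite F" "\<gamma> ` F \<subseteq> mindices K"
  shows "(\<lambda>t x. \<Sum>i\<in>F. c i * t ^ e i * monom_eval (\<gamma> i) x) \<in> tpolys_le K"
proof -
  let ?g = "\<lambda>i. (e i, \<gamma> i)"
  let ?c = "\<lambda>q. \<Sum>i\<in>{i\<in>F. ?g i = q}. c i"
  have "(\<lambda>t x. \<Sum>i\<in>F. c i * t ^ e i * monom_eval (\<gamma> i) x)
      = (\<lambda>t x. \<Sum>q\<in>?g ` F. ?c q * t ^ fst q * monom_eval (snd q) x)"
  proof (intro ext)
    fix t x
    have "(\<Sum>q\<in>?g ` F. ?c q * t ^ fst q * monom_eval (snd q) x)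
        = (\<Sum>q\<in>?g ` F. \<Sum>i\<in>{i\<in>F. ?g i = q}. c i * t ^ e i * monom_eval (\<gamma> i) x)"
      unfolding sum_distrib_right by (intro sum.cong refl) auto
    also have "\<dots> = (\<Sum>i\<in>F. c i * t ^ e i * monom_eval (\<gamma> i) x)"
      by (rule sum.group) (use assms in auto)
    finally show "(\<Sum>i\<in>F. c i * t ^ e i * monom_eval (\<gamma> i) x)
      = (\<Sum>q\<in>?g ` F. ?c q * t ^ fst q * monom_eval (snd q) x)" ..
  qed
  moreover have "finite (?g ` F)" "snd ` ?g ` F \<subseteq> mindices K" using assms by auto
  ultimately show ?thesis by (intro tpolys_leI) auto
qed

lemma tpolys_le_at: "G \<in> tpolys_le K \<Longrightarrow> G t \<in> polys_le K"
proof (elim tpolys_leE)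
  fix F c assume "finite F" "snd ` F \<subseteq> mindices K"
    and "G = (\<lambda>t x. \<Sum>q\<in>F. c q * t ^ fst q * monom_eval (snd q) x)"
  thus "G t \<in> polys_le K" using polys_le_comb[of F snd K "\<lambda>q. c q * t ^ fst q"] by simp
qed

lemma tpolys_le_mono:
  assumes "a \<le> b" "G \<in> tpolys_le a"
  shows "G \<in> tpolys_le b"
  using assms(2)
proof (rule tpolys_leE)
  fix F c assume "finite F" "snd ` F \<subseteq> mindices a"
    and "G = (\<lambda>t x. \<Sum>q\<in>F. c q * t ^ fst q * monom_eval (snd q) x)"
  with mindices_mono[OF assms(1)] show ?thesis by (intro tpolys_leI) auto
qed

lemma tpolys_le_const: "(\<lambda>t x. r) \<in> tpolys_le K"
  using tpolys_le_comb[of "{()}" "\<lambda>_. \<lambda>_. 0" K "\<lambda>_. r" "\<lambda>_. 0"] by simp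

lemma tpolys_le_add:
  assumes "G \<in> tpolys_le K" "H \<in> tpolys_le K"
  shows "(\<lambda>t x. G t x + H t x) \<in> tpolys_le K"
proof -
  obtain F c where F: "finite F" "snd ` F \<subseteq> mindices K"
    and G: "G = (\<lambda>t x. \<Sum>q\<in>F. c q * t ^ fst q * monom_eval (snd q) x)"
    using assms(1) by (rule tpolys_leE)
  obtain F' c' where F': "finite F'" "snd ` F' \<subseteq> mindices K"
    and H: "H = (\<lambda>t x. \<Sum>q\<in>F'. c' q * t ^ fst q * monom_eval (snd q) x)"
    using assms(2) by (rule tpolys_leE)
  have "(\<lambda>t x. G t x + H t x) = (\<lambda>t x. \<Sum>i\<in>F <+> F'.
      case_sum c c' i * t ^ case_sum fst fst i * monom_eval (case_sum snd snd i) x)"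
    unfolding G H using F F' by (simp add: sum.Plus o_def)
  also have "\<dots> \<in> tpolys_le K"
    by (rule tpolys_le_comb) (use F F' in auto)
  finally show ?thesis .
qed

lemma tpolys_le_mult:
  assumes "G \<in> tpolys_le a" "H \<in> tpolys_le b"
  shows "(\<lambda>t x. G t x * H t x) \<in> tpolys_le (a + b)"
proof -
  obtain F c where F: "finite F" "snd ` F \<subseteq> mindices a"
    and G: "G = (\<lambda>t x. \<Sum>q\<in>F. c q * t ^ fst q * monom_eval (snd q) x)"
    using assms(1) by (rule tpolys_leE)
  obtain F' c' where F': "finite F'" "snd ` F' \<subseteq> mindices b"
    and H: "H = (\<lambda>t x. \<Sum>q\<in>F'. c' q * t ^ fst q * monom_eval (snd q) x)"
    using assms(2) by (rule tpolys_leE)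
  have "(\<lambda>t x. G t x * H t x) = (\<lambda>t x. \<Sum>p\<in>F \<times> F'. (c (fst p) * c' (snd p))
      * t ^ (fst (fst p) + fst (snd p)) * monom_eval (\<lambda>i. snd (fst p) i + snd (snd p) i) x)"
    unfolding G H sum_product sum.cartesian_product
    by (simp add: monom_eval_add power_add mult_ac case_prod_beta)
  also have "\<dots> \<in> tpolys_le (a + b)"
    by (rule tpolys_le_comb) (use F F' in \<open>auto intro!: add_in_mindices\<close>)
  finally show ?thesis .
qed

lemma tpolys_le_sum:
  "finite S \<Longrightarrow> (\<And>i. i \<in> S \<Longrightarrow> G i \<in> tpolys_le K) \<Longrightarrow> (\<lambda>t x. \<Sum>i\<in>S. G i t x) \<in> tpolys_le K"
proof (induction S rule: finite_induct)
  case empty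
  thus ?case using tpolys_le_const[of 0 K] by simp
next
  case (insert a F)
  thus ?case using tpolys_le_add[of "G a" K "\<lambda>t x. \<Sum>i\<in>F. G i t x"] by simp
qed

lemma tpolys_le_prod_power:
  "finite S \<Longrightarrow> (\<And>i. i \<in> S \<Longrightarrow> A i \<in> tpolys_le 1) \<Longrightarrow>
   (\<lambda>t x. \<Prod>i\<in>S. (A i t x) ^ \<alpha> i) \<in> tpolys_le (\<Sum>i\<in>S. \<alpha> i)"
proof (induction S rule: finite_induct)
  case empty
  thus ?case using tpolys_le_const[of 1 0] by simp
next
  case (insert a F)
  have "(\<lambda>t x. (A a t x) ^ n) \<in> tpolys_le n" for n
  proof (induction n)
    case 0
    thus ?case using tpolys_le_const[of 1 0] by simp
  next
    case (Suc n)
    thus ?case using tpolys_le_mult[of "A a" 1 "\<lambda>t x. (A a t x) ^ n" n] insert.prems by simp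
  qed
  hence "(\<lambda>t x. (A a t x) ^ \<alpha> a * (\<Prod>i\<in>F. (A i t x) ^ \<alpha> i)) \<in> tpolys_le (\<alpha> a + (\<Sum>i\<in>F. \<alpha> i))"
    using insert by (intro tpolys_le_mult) auto
  thus ?case using insert.hyps by simp
qed

lemma tpolys_le_segment_coord: "(\<lambda>t x. u $ i + t * (x $ i - u $ i)) \<in> tpolys_le 1"
proof -
  let ?c = "\<lambda>k::nat. if k = 0 then u $ i else if k = 1 then 1 else - u $ i"
  let ?e = "\<lambda>k::nat. if k = 0 then 0 else 1::nat"
  let ?g = "\<lambda>k::nat. if k = 1 then unit_mindex i else (\<lambda>_. 0)"
  have "(\<lambda>t x. \<Sum>k\<in>{0,1,2}. ?c k * t ^ ?e k * monom_eval (?g k) x) \<in> tpolys_le 1"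
    by (rule tpolys_le_comb) (auto simp: unit_mindex_in_mindices)
  thus ?thesis by (simp add: monom_eval_unit_mindex algebra_simps)
qed

lemma polys_le_on_segments:
  assumes "g \<in> polys_le K"
  shows "(\<lambda>t x. g (u + t *\<^sub>R (x - u))) \<in> tpolys_le K"
proof -
  obtain a where g: "g = (\<lambda>x. \<Sum>\<alpha>\<in>mindices K. a \<alpha> * monom_eval \<alpha> x)"
    using assms by (rule polys_leE)
  have "(\<lambda>t x. g (u + t *\<^sub>R (x - u))) = (\<lambda>t x. \<Sum>\<alpha>\<in>mindices K.
      a \<alpha> * (\<Prod>i\<in>UNIV. (u $ i + t * (x $ i - u $ i)) ^ \<alpha> i))"
    unfolding g monom_eval_def by simp
  also have "\<dots> \<in> tpolys_le K"
  proof (rule tpolys_le_sum[OF finite_mindices])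
    fix \<alpha> :: "'a \<Rightarrow> nat" assume "\<alpha> \<in> mindices K"
    hence "(\<lambda>t x. \<Prod>i\<in>UNIV. (u $ i + t * (x $ i - u $ i)) ^ \<alpha> i) \<in> tpolys_le K"
      using tpolys_le_prod_power[of UNIV "\<lambda>i t x. u $ i + t * (x $ i - u $ i)" \<alpha>]
        tpolys_le_segment_coord
      by (auto simp: mindices_def mdeg_def intro: tpolys_le_mono)
    from tpolys_le_mult[OF tpolys_le_const[of "a \<alpha>" 0] this]
    show "(\<lambda>t x. a \<alpha> * (\<Prod>i\<in>UNIV. (u $ i + t * (x $ i - u $ i)) ^ \<alpha> i)) \<in> tpolys_le K"
      by simp
  qed
  finally show ?thesis .
qed

lemma polys_le_directional_on_segments:
  assumes "\<And>i. g i \<in> polys_le (d - 1)" "1 \<le> d"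
  shows "(\<lambda>x. \<Sum>i\<in>UNIV. (x - u) $ i * g i (u + t *\<^sub>R (x - u))) \<in> polys_le d"
proof -
  have "(\<lambda>x. (x $ i + - u $ i) * g i (u + t *\<^sub>R (x - u))) \<in> polys_le (1 + (d - 1))" for i
  proof (rule polys_le_mult)
    show "(\<lambda>x. x $ i + - u $ i) \<in> polys_le 1"
      by (intro polys_le_add polys_le_coord polys_le_const) simp
    show "(\<lambda>x. g i (u + t *\<^sub>R (x - u))) \<in> polys_le (d - 1)"
      using tpolys_le_at[OF polys_le_on_segments[OF assms(1), where u=u], where t=t] by simp
  qed
  hence "(\<lambda>x. \<Sum>i\<in>UNIV. (x $ i + - u $ i) * g i (u + t *\<^sub>R (x - u))) \<in> polys_le d"
    using assms(2) by (intro polys_le_sum) simp_all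
  thus ?thesis by simp
qed

lemma DERIV_tpoly:
  "((\<lambda>t. \<Sum>q\<in>F. c q * t ^ e q * b q) has_real_derivative
     (\<Sum>q\<in>F. (c q * real (e q)) * t ^ (e q - 1) * b q)) (at t)"
  by (rule DERIV_sum) (auto intro!: derivative_eq_intros)

lemma tpolys_le_DERIV_riesz_fn:
  assumes G: "G \<in> tpolys_le K" and G': "\<And>t x. ((\<lambda>t. G t x) has_real_derivative G' t x) (at t)"
  shows "G' \<in> tpolys_le K"
    and "((\<lambda>t. riesz_fn K y (G t)) has_real_derivative riesz_fn K y (G' t)) (at t)"
proof -
  obtain F c where F: "finite F" "snd ` F \<subseteq> mindices K"
    and G_eq: "G = (\<lambda>t x. \<Sum>q\<in>F. c q * t ^ fst q * monom_eval (snd q) x)"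
    using G by (rule tpolys_leE)
  define c' where "c' q = c q * real (fst q)" for q
  have G'_eq: "G' = (\<lambda>t x. \<Sum>q\<in>F. c' q * t ^ (fst q - 1) * monom_eval (snd q) x)"
  proof (intro ext)
    fix t x
    have "((\<lambda>t. G t x) has_real_derivative
        (\<Sum>q\<in>F. c' q * t ^ (fst q - 1) * monom_eval (snd q) x)) (at t)"
      unfolding G_eq c'_def by (rule DERIV_tpoly)
    with G' show "G' t x = (\<Sum>q\<in>F. c' q * t ^ (fst q - 1) * monom_eval (snd q) x)"
      by (rule DERIV_unique)
  qed
  show "G' \<in> tpolys_le K" unfolding G'_eq by (rule tpolys_le_comb[OF F])
  have "riesz_fn K y (G s) = (\<Sum>q\<in>F. c q * s ^ fst q * y (snd q))"
    and "riesz_fn K y (G' s) = (\<Sum>q\<in>F. c' q * s ^ (fst q - 1) * y (snd q))" for s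
    unfolding G_eq G'_eq
    using riesz_fn_comb[OF F, of y "\<lambda>q. c q * s ^ fst q"]
      riesz_fn_comb[OF F, of y "\<lambda>q. c' q * s ^ (fst q - 1)"]
    by (simp_all add: mult.assoc)
  thus "((\<lambda>t. riesz_fn K y (G t)) has_real_derivative riesz_fn K y (G' t)) (at t)"
    unfolding c'_def by (simp only: DERIV_tpoly)
qed

section \<open>Derivatives along lines\<close>

lemma supp_pdiff_subset: "{\<beta>. pdiff i p \<beta> \<noteq> 0} \<subseteq> (\<lambda>\<alpha>. \<alpha>(i := \<alpha> i - 1)) ` {\<alpha>. p \<alpha> \<noteq> 0}"
proof
  fix \<beta> assume "\<beta> \<in> {\<beta>. pdiff i p \<beta> \<noteq> 0}"
  hence "p (\<beta>(i := \<beta> i + 1)) \<noteq> 0" by (simp add: pdiff_def)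
  moreover have "\<beta> = (\<beta>(i := \<beta> i + 1))(i := (\<beta>(i := \<beta> i + 1)) i - 1)" by simp
  ultimately show "\<beta> \<in> (\<lambda>\<alpha>. \<alpha>(i := \<alpha> i - 1)) ` {\<alpha>. p \<alpha> \<noteq> 0}" by blast
qed

lemma is_poly_pdiff: "is_poly p \<Longrightarrow> is_poly (pdiff i p)"
  unfolding is_poly_def by (rule finite_subset[OF supp_pdiff_subset]) simp

lemma supp_pdiff_subset_mindices:
  assumes "{\<alpha>. p \<alpha> \<noteq> 0} \<subseteq> mindices K"
  shows "{\<beta>. pdiff i p \<beta> \<noteq> 0} \<subseteq> mindices (K - 1)"
proof
  fix \<beta> assume "\<beta> \<in> {\<beta>. pdiff i p \<beta> \<noteq> 0}"
  hence "p (\<beta>(i := \<beta> i + 1)) \<noteq> 0" by (simp add: pdiff_def)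
  hence "mdeg (\<beta>(i := \<beta> i + 1)) \<le> K" using assms by (auto simp: mindices_def)
  thus "\<beta> \<in> mindices (K - 1)" unfolding mdeg_fun_upd_Suc mindices_def by simp
qed

lemma DERIV_monom_eval_line:
  "((\<lambda>t. monom_eval \<alpha> (a + t *\<^sub>R w)) has_real_derivative
     (\<Sum>j\<in>UNIV. w $ j * real (\<alpha> j) * monom_eval (\<alpha>(j := \<alpha> j - 1)) (a + t *\<^sub>R w))) (at t)"
proof -
  let ?z = "a + t *\<^sub>R w"
  have "((\<lambda>t. \<Prod>l\<in>UNIV. (a + t *\<^sub>R w) $ l ^ \<alpha> l) has_real_derivative
      (\<Sum>l\<in>UNIV. (real (\<alpha> l) * ?z $ l ^ (\<alpha> l - 1) * w $ l) * (\<Prod>k\<in>UNIV - {l}. ?z $ k ^ \<alpha> k))) (at t)"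
    by (rule has_field_derivative_prod) (auto intro!: derivative_eq_intros)
  moreover have "(real (\<alpha> l) * ?z $ l ^ (\<alpha> l - 1) * w $ l) * (\<Prod>k\<in>UNIV - {l}. ?z $ k ^ \<alpha> k)
      = w $ l * real (\<alpha> l) * monom_eval (\<alpha>(l := \<alpha> l - 1)) ?z" for l
    by (subst monom_eval_split[where j=l]) (auto intro!: prod.cong)
  ultimately show ?thesis
    by (simp only: monom_eval_def[of \<alpha>] cong: sum.cong)
qed

lemma peval_pdiff_eq:
  assumes "is_poly p"
  shows "peval (pdiff j p) z = (\<Sum>\<alpha>\<in>{\<alpha>. p \<alpha> \<noteq> 0}. p \<alpha> * (real (\<alpha> j) * monom_eval (\<alpha>(j := \<alpha> j - 1)) z))"
proof -
  let ?S1 = "{\<alpha>. p \<alpha> \<noteq> 0 \<and> 1 \<le> \<alpha> j}"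
  have "peval (pdiff j p) z = (\<Sum>\<alpha>\<in>?S1. p \<alpha> * (real (\<alpha> j) * monom_eval (\<alpha>(j := \<alpha> j - 1)) z))"
    unfolding peval_def
    by (rule sum.reindex_bij_witness[where i="\<lambda>\<alpha>. \<alpha>(j := \<alpha> j - 1)" and j="\<lambda>\<beta>. \<beta>(j := \<beta> j + 1)"])
      (auto simp: pdiff_def of_nat_diff)
  also have "\<dots> = (\<Sum>\<alpha>\<in>{\<alpha>. p \<alpha> \<noteq> 0}. p \<alpha> * (real (\<alpha> j) * monom_eval (\<alpha>(j := \<alpha> j - 1)) z))"
    by (rule sum.mono_neutral_left) (use assms in \<open>auto simp: is_poly_def\<close>)
  finally show ?thesis .
qed

lemma DERIV_peval_line:
  assumes "is_poly p"
  shows "((\<lambda>t. peval p (a + t *\<^sub>R w)) has_real_derivative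
     (\<Sum>j\<in>UNIV. w $ j * peval (pdiff j p) (a + t *\<^sub>R w))) (at t)"
proof -
  let ?z = "a + t *\<^sub>R w"
  have "((\<lambda>t. peval p (a + t *\<^sub>R w)) has_real_derivative (\<Sum>\<alpha>\<in>{\<alpha>. p \<alpha> \<noteq> 0}.
      p \<alpha> * (\<Sum>j\<in>UNIV. w $ j * real (\<alpha> j) * monom_eval (\<alpha>(j := \<alpha> j - 1)) ?z))) (at t)"
    unfolding peval_def by (intro DERIV_sum DERIV_cmult DERIV_monom_eval_line)
  also have "(\<Sum>\<alpha>\<in>{\<alpha>. p \<alpha> \<noteq> 0}. p \<alpha> * (\<Sum>j\<in>UNIV. w $ j * real (\<alpha> j) * monom_eval (\<alpha>(j := \<alpha> j - 1)) ?z))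
      = (\<Sum>j\<in>UNIV. w $ j * peval (pdiff j p) ?z)"
    by (simp add: peval_pdiff_eq[OF assms] sum_distrib_left sum_distrib_right mult_ac
        sum.swap[where A="{\<alpha>. p \<alpha> \<noteq> 0}"])
  finally show ?thesis .
qed

lemma sos_hessian_quadratic_form:
  assumes "\<forall>x i j. peval (pdiff i (pdiff j p)) x = (\<Sum>k<r. peval (Q k i) x * peval (Q k j) x)"
  shows "(\<Sum>i\<in>UNIV. w $ i * (\<Sum>j\<in>UNIV. w $ j * peval (pdiff j (pdiff i p)) z))
       = (\<Sum>k<r. (\<Sum>i\<in>UNIV. w $ i * peval (Q k i) z) * (\<Sum>i\<in>UNIV. w $ i * peval (Q k i) z))"
proof -
  have "(\<Sum>i\<in>UNIV. w $ i * (\<Sum>j\<in>UNIV. w $ j * peval (pdiff j (pdiff i p)) z))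
      = (\<Sum>i\<in>UNIV. \<Sum>j\<in>UNIV. \<Sum>k<r. (w $ i * peval (Q k i) z) * (w $ j * peval (Q k j) z))"
    using assms by (simp add: sum_distrib_left mult_ac)
  also have "\<dots> = (\<Sum>k<r. \<Sum>i\<in>UNIV. \<Sum>j\<in>UNIV. (w $ i * peval (Q k i) z) * (w $ j * peval (Q k j) z))"
    by (simp add: sum.swap[where B="{..<r}"])
  also have "\<dots> = (\<Sum>k<r. (\<Sum>i\<in>UNIV. w $ i * peval (Q k i) z) * (\<Sum>i\<in>UNIV. w $ i * peval (Q k i) z))"
    by (simp add: sum_product)
  finally show ?thesis .
qed

lemma DERIV_directional_sos_hessian:
  assumes "is_poly p"
    and "\<forall>x i j. peval (pdiff i (pdiff j p)) x = (\<Sum>k<r. peval (Q k i) x * peval (Q k j) x)"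
  shows "((\<lambda>t. \<Sum>i\<in>UNIV. w $ i * peval (pdiff i p) (a + t *\<^sub>R w)) has_real_derivative
     (\<Sum>k<r. (\<Sum>i\<in>UNIV. w $ i * peval (Q k i) (a + t *\<^sub>R w))
            * (\<Sum>i\<in>UNIV. w $ i * peval (Q k i) (a + t *\<^sub>R w)))) (at t)"
  unfolding sos_hessian_quadratic_form[OF assms(2), symmetric]
  by (intro DERIV_sum DERIV_cmult DERIV_peval_line is_poly_pdiff assms(1))

section \<open>Degree bounds for sums of squares\<close>

lemma isCont_eq_of_eq_off_point:
  fixes f g :: "real \<Rightarrow> real"
  assumes "isCont f a" "isCont g a" "\<And>s. s \<noteq> a \<Longrightarrow> f s = g s"
  shows "f a = g a"
proof -
  have "eventually (\<lambda>s. f s = g s) (at a)"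
    by (auto simp: eventually_at_filter assms(3))
  hence "(g \<longlongrightarrow> f a) (at a)"
    using assms(1) tendsto_cong by (fastforce simp: isCont_def)
  with assms(2) show ?thesis by (simp add: isCont_def tendsto_unique[OF trivial_limit_at])
qed

lemma power_mult_inverse_power:
  fixes s :: real
  assumes "s \<noteq> 0" "n \<le> N"
  shows "s ^ N * (1 / s) ^ n = s ^ (N - n)"
proof -
  have "s ^ N = s ^ (N - n) * s ^ n" using assms(2) by (simp flip: power_add)
  thus ?thesis using assms(1) by (simp add: power_one_over field_simps)
qed

lemma homogenization_eq:
  assumes "s \<noteq> 0" "k \<le> D"
  shows "(\<Sum>\<alpha>\<in>mindices k. a \<alpha> * s ^ (D - mdeg \<alpha>) * monom_eval \<alpha> x)
       = s ^ D * (\<Sum>\<alpha>\<in>mindices k. a \<alpha> * monom_eval \<alpha> ((1 / s) *\<^sub>R x))"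
proof -
  have "s ^ D * (\<Sum>\<alpha>\<in>mindices k. a \<alpha> * monom_eval \<alpha> ((1 / s) *\<^sub>R x))
      = (\<Sum>\<alpha>\<in>mindices k. a \<alpha> * (s ^ D * (1 / s) ^ mdeg \<alpha>) * monom_eval \<alpha> x)"
    by (simp add: sum_distrib_left monom_eval_scaleR mult_ac)
  also have "\<dots> = (\<Sum>\<alpha>\<in>mindices k. a \<alpha> * s ^ (D - mdeg \<alpha>) * monom_eval \<alpha> x)"
    by (intro sum.cong refl) (use assms in \<open>simp add: power_mult_inverse_power mindices_def\<close>)
  finally show ?thesis ..
qed

text \<open>Homogenize both sides as \<open>s\<^sup>D p(x / s)\<close> and let \<open>s \<rightarrow> 0\<close>: only the top-degree parts
  survive on the left, and nothing survives on the right.\<close>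

lemma sos_top_degree_parts_vanish:
  fixes a :: "nat \<Rightarrow> ('n::finite \<Rightarrow> nat) \<Rightarrow> real"
  assumes eq: "\<And>x. (\<Sum>k<r. (\<Sum>\<alpha>\<in>mindices D. a k \<alpha> * monom_eval \<alpha> x) * (\<Sum>\<alpha>\<in>mindices D. a k \<alpha> * monom_eval \<alpha> x))
                 = (\<Sum>\<beta>\<in>mindices (2 * e). b \<beta> * monom_eval \<beta> x)"
    and "e < D"
  shows "(\<Sum>k<r. (\<Sum>\<alpha>\<in>{\<alpha>\<in>mindices D. mdeg \<alpha> = D}. a k \<alpha> * monom_eval \<alpha> x)
                 * (\<Sum>\<alpha>\<in>{\<alpha>\<in>mindices D. mdeg \<alpha> = D}. a k \<alpha> * monom_eval \<alpha> x)) = 0"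
proof -
  define P where "P k s = (\<Sum>\<alpha>\<in>mindices D. a k \<alpha> * s ^ (D - mdeg \<alpha>) * monom_eval \<alpha> x)" for k s
  define L where "L s = (\<Sum>k<r. P k s * P k s)" for s :: real
  define R where "R s = (\<Sum>\<beta>\<in>mindices (2 * e). b \<beta> * s ^ (2 * D - mdeg \<beta>) * monom_eval \<beta> x)" for s :: real
  have "L s = R s" if "s \<noteq> 0" for s
  proof -
    have "L s = s ^ (2 * D) * (\<Sum>k<r. (\<Sum>\<alpha>\<in>mindices D. a k \<alpha> * monom_eval \<alpha> ((1 / s) *\<^sub>R x))
                                  * (\<Sum>\<alpha>\<in>mindices D. a k \<alpha> * monom_eval \<alpha> ((1 / s) *\<^sub>R x)))"
      unfolding L_def P_def homogenization_eq[OF that order_refl]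
      by (simp add: sum_distrib_left power_mult mult_ac power2_eq_square)
    also have "\<dots> = R s"
      unfolding eq R_def using \<open>e < D\<close> by (simp add: homogenization_eq[OF that])
    finally show ?thesis .
  qed
  moreover have "isCont L 0" "isCont R 0"
    unfolding L_def P_def R_def by (intro continuous_intros)+
  ultimately have "L 0 = R 0" using isCont_eq_of_eq_off_point by blast
  moreover have "R 0 = 0"
    unfolding R_def by (intro sum.neutral ballI) (use \<open>e < D\<close> in \<open>auto simp: mindices_def\<close>)
  moreover have "P k 0 = (\<Sum>\<alpha>\<in>{\<alpha>\<in>mindices D. mdeg \<alpha> = D}. a k \<alpha> * monom_eval \<alpha> x)" for k
  proof -
    have "P k 0 = (\<Sum>\<alpha>\<in>mindices D. if mdeg \<alpha> = D then a k \<alpha> * monom_eval \<alpha> x else 0)"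
      unfolding P_def by (intro sum.cong refl) (auto simp: mindices_def)
    thus ?thesis by (simp add: sum.inter_filter[OF finite_mindices])
  qed
  ultimately show ?thesis unfolding L_def by simp
qed

lemma sos_summands_degree_drop:
  fixes g :: "nat \<Rightarrow> real^'n::finite \<Rightarrow> real"
  assumes g: "\<forall>k<r. g k \<in> polys_le D" and h: "h \<in> polys_le (2 * e)"
    and sos: "\<And>x. (\<Sum>k<r. g k x * g k x) = h x" and "e < D"
  shows "\<forall>k<r. g k \<in> polys_le (D - 1)"
proof -
  have "\<forall>k. \<exists>a. k < r \<longrightarrow> g k = (\<lambda>x. \<Sum>\<alpha>\<in>mindices D. a \<alpha> * monom_eval \<alpha> x)"
    using g unfolding polys_le_def by blast
  then obtain a where a: "\<And>k. k < r \<Longrightarrow> g k = (\<lambda>x. \<Sum>\<alpha>\<in>mindices D. a k \<alpha> * monom_eval \<alpha> x)"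
    by metis
  obtain b where b: "h = (\<lambda>x. \<Sum>\<beta>\<in>mindices (2 * e). b \<beta> * monom_eval \<beta> x)"
    using h by (rule polys_leE)
  let ?T = "\<lambda>k x. \<Sum>\<alpha>\<in>{\<alpha>\<in>mindices D. mdeg \<alpha> = D}. a k \<alpha> * monom_eval \<alpha> x"
  have "(\<Sum>k<r. (\<Sum>\<alpha>\<in>mindices D. a k \<alpha> * monom_eval \<alpha> x) * (\<Sum>\<alpha>\<in>mindices D. a k \<alpha> * monom_eval \<alpha> x))
      = (\<Sum>\<beta>\<in>mindices (2 * e). b \<beta> * monom_eval \<beta> x)" for x
    using sos[of x] by (simp add: a b)
  hence "(\<Sum>k<r. ?T k x * ?T k x) = 0" for x
    using \<open>e < D\<close> by (rule sos_top_degree_parts_vanish)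
  hence top_0: "?T k x = 0" if "k < r" for k x
    using that by (subst (asm) sum_nonneg_eq_0_iff) auto
  show ?thesis
  proof (intro allI impI)
    fix k assume "k < r"
    have "a k \<alpha> = 0" if "\<alpha> \<in> {\<alpha>\<in>mindices D. mdeg \<alpha> = D}" for \<alpha>
      by (rule monom_coeffs_eq_0[OF _ top_0[OF \<open>k < r\<close>] that]) (simp add: finite_mindices)
    hence "g k = (\<lambda>x. \<Sum>\<alpha>\<in>mindices (D - 1). a k \<alpha> * monom_eval \<alpha> x)"
      unfolding a[OF \<open>k < r\<close>]
      by (intro ext sum.mono_neutral_right)
        (use finite_mindices[of D, unfolded mindices_def] in \<open>auto simp: mindices_def\<close>)
    thus "g k \<in> polys_le (D - 1)" by (rule polys_leI)
  qed
qed

lemma sos_summands_polys_le: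
  fixes g :: "nat \<Rightarrow> real^'n::finite \<Rightarrow> real"
  assumes "\<forall>k<r. g k \<in> polys_le D" "h \<in> polys_le (2 * e)" "\<And>x. (\<Sum>k<r. g k x * g k x) = h x"
  shows "\<forall>k<r. g k \<in> polys_le e"
  using assms(1)
proof (induction D rule: less_induct)
  case (less D)
  show ?case
  proof (cases "D \<le> e")
    case True
    thus ?thesis using less.prems polys_le_mono by blast
  next
    case False
    hence "\<forall>k<r. g k \<in> polys_le (D - 1)"
      using sos_summands_degree_drop[OF less.prems assms(2,3)] by simp
    thus ?thesis using less.IH[of "D - 1"] False by simp
  qed
qed

section \<open>Jensen's inequality for SOS-convex polynomials\<close>

lemma sos_convex_factors_polys_le:
  fixes p :: "('n::finite) mpoly_coeffs" and Q :: "nat \<Rightarrow> 'n \<Rightarrow> 'n mpoly_coeffs"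
  assumes P: "is_poly p" "{\<alpha>. p \<alpha> \<noteq> 0} \<subseteq> mindices (2 * d)"
    and Q: "\<forall>k<r. \<forall>i. is_poly (Q k i)"
    and H: "\<forall>x i j. peval (pdiff i (pdiff j p)) x = (\<Sum>k<r. peval (Q k i) x * peval (Q k j) x)"
  shows "\<forall>k<r. peval (Q k i) \<in> polys_le (d - 1)"
proof (rule sos_summands_polys_le[where g="\<lambda>k. peval (Q k i)" and D="Max ((\<lambda>k. pdeg (Q k i)) ` {..<r})"])
  show "\<forall>k<r. peval (Q k i) \<in> polys_le (Max ((\<lambda>k. pdeg (Q k i)) ` {..<r}))"
  proof (intro allI impI peval_in_polys_le)
    fix k assume "k < r"
    hence "pdeg (Q k i) \<le> Max ((\<lambda>k. pdeg (Q k i)) ` {..<r})" by (intro Max_ge) auto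
    thus "{\<alpha>. Q k i \<alpha> \<noteq> 0} \<subseteq> mindices (Max ((\<lambda>k. pdeg (Q k i)) ` {..<r}))"
      using supp_subset_mindices_pdeg Q \<open>k < r\<close> mindices_mono by blast
    show "is_poly (Q k i)" using Q \<open>k < r\<close> by blast
  qed
  have "{\<alpha>. pdiff i (pdiff i p) \<alpha> \<noteq> 0} \<subseteq> mindices (2 * d - 1 - 1)"
    by (intro supp_pdiff_subset_mindices P)
  moreover have "2 * d - 1 - 1 = 2 * (d - 1)" by simp
  ultimately show "peval (pdiff i (pdiff i p)) \<in> polys_le (2 * (d - 1))"
    by (intro peval_in_polys_le is_poly_pdiff P) simp
  show "(\<Sum>k<r. peval (Q k i) x * peval (Q k i) x) = peval (pdiff i (pdiff i p)) x" for x
    using H by simp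
qed

lemma DERIV2_nonneg_imp_le:
  fixes h :: "real \<Rightarrow> real"
  assumes "\<And>t. (h has_real_derivative h' t) (at t)" "\<And>t. (h' has_real_derivative h'' t) (at t)"
    and "\<And>t. h'' t \<ge> 0" "h' 0 = 0"
  shows "h 0 \<le> h 1"
proof -
  have "h' 0 \<le> h' t" if "0 \<le> t" for t
    by (rule DERIV_nonneg_imp_nondecreasing[OF that]) (use assms(2,3) in blast)
  hence "\<exists>y. DERIV h t :> y \<and> y \<ge> 0" if "0 \<le> t" for t
    using assms(1,4) that by auto
  from this show ?thesis by (rule DERIV_nonneg_imp_nondecreasing[of 0 1, rotated]) simp_all
qed

text \<open>With \<open>u\<close> the first moments of \<open>y\<close>, the Riesz functional of \<open>t \<mapsto> p(u + t (x - u))\<close> has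
  nonnegative second derivative and vanishing first derivative at \<open>t = 0\<close>, since \<open>y\<close> reproduces
  affine functions.\<close>

lemma sos_convex_jensen:
  fixes p :: "('n::finite) mpoly_coeffs"
  assumes P: "is_poly p" and S: "sos_convex p" and supp: "{\<alpha>. p \<alpha> \<noteq> 0} \<subseteq> mindices (2 * d)"
    and y0: "y (\<lambda>_. 0) = 1" and M: "moment_psd d y"
  shows "peval p (\<chi> i. y (unit_mindex i)) \<le> riesz p y"
proof (cases "d = 0")
  case True
  with supp have "{\<alpha>. p \<alpha> \<noteq> 0} \<subseteq> mindices 0" by simp
  from peval_eq_sum_mindices[OF P this] riesz_eq_sum_mindices[OF P this]
  show ?thesis by (simp add: mindices_0 y0)
next
  case False
  hence d1: "1 \<le> d" "1 \<le> 2 * d" by simp_all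
  define u :: "real^'n" where "u = (\<chi> i. y (unit_mindex i))"
  obtain r :: nat and Q :: "nat \<Rightarrow> 'n \<Rightarrow> 'n mpoly_coeffs" where Q: "\<forall>k<r. \<forall>i. is_poly (Q k i)"
    and H: "\<forall>x i j. peval (pdiff i (pdiff j p)) x = (\<Sum>k<r. peval (Q k i) x * peval (Q k j) x)"
    using S unfolding sos_convex_def by blast
  let ?L = "riesz_fn (2 * d) y"
  define G where "G t x = peval p (u + t *\<^sub>R (x - u))" for t x
  define G1 where "G1 t x = (\<Sum>i\<in>UNIV. (x - u) $ i * peval (pdiff i p) (u + t *\<^sub>R (x - u)))" for t x
  define s where "s k t x = (\<Sum>i\<in>UNIV. (x - u) $ i * peval (Q k i) (u + t *\<^sub>R (x - u)))" for k t x
  define G2 where "G2 t x = (\<Sum>k<r. s k t x * s k t x)" for t x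
  have "G \<in> tpolys_le (2 * d)"
    unfolding G_def by (rule polys_le_on_segments, rule peval_in_polys_le[OF P supp])
  moreover have "((\<lambda>t. G t x) has_real_derivative G1 t x) (at t)" for t x
    unfolding G_def G1_def by (rule DERIV_peval_line[OF P])
  ultimately have G1: "G1 \<in> tpolys_le (2 * d)"
    and dG: "\<And>t. ((\<lambda>t. ?L (G t)) has_real_derivative ?L (G1 t)) (at t)"
    by (rule tpolys_le_DERIV_riesz_fn)+
  have "((\<lambda>t. G1 t x) has_real_derivative G2 t x) (at t)" for t x
    unfolding G1_def G2_def s_def by (rule DERIV_directional_sos_hessian[OF P H])
  with G1 have dG1: "\<And>t. ((\<lambda>t. ?L (G1 t)) has_real_derivative ?L (G2 t)) (at t)"
    by (rule tpolys_le_DERIV_riesz_fn(2))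
  have "s k t \<in> polys_le d" if "k < r" for k t
    unfolding s_def using sos_convex_factors_polys_le[OF P supp Q H] that d1
    by (intro polys_le_directional_on_segments) auto
  hence G2_nonneg: "?L (G2 t) \<ge> 0" for t
    unfolding G2_def by (intro riesz_fn_sos_nonneg[OF M])
  have "G1 0 = (\<lambda>x. \<Sum>i\<in>UNIV. peval (pdiff i p) u * (x $ i - y (unit_mindex i)))"
    by (simp add: G1_def u_def fun_eq_iff mult.commute)
  hence G1_0: "?L (G1 0) = 0"
    using riesz_fn_centered_linear[OF d1(2), of y, OF y0] by simp
  have "?L (G 0) \<le> ?L (G 1)"
    by (rule DERIV2_nonneg_imp_le[OF dG dG1 G2_nonneg G1_0])
  moreover have "G 0 = (\<lambda>x. peval p u)" "G 1 = peval p" by (simp_all add: G_def fun_eq_iff)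
  ultimately show ?thesis by (simp add: u_def riesz_fn_const y0 riesz_fn_peval[OF P supp])
qed

section \<open>The moment relaxation\<close>

lemma riesz_monom_moments: "riesz p (\<lambda>\<alpha>. monom_eval \<alpha> x) = peval p x"
  by (simp add: riesz_def peval_def)

lemma moment_psd_monom_moments:
  fixes x :: "real^'n::finite"
  shows "moment_psd k (\<lambda>\<alpha>. monom_eval \<alpha> x)"
  unfolding moment_psd_def
proof
  fix u :: "('n \<Rightarrow> nat) \<Rightarrow> real"
  have "(\<Sum>\<alpha>\<in>mindices k. \<Sum>\<beta>\<in>mindices k. u \<alpha> * u \<beta> * monom_eval (\<lambda>i. \<alpha> i + \<beta> i) x)
      = (\<Sum>\<alpha>\<in>mindices k. u \<alpha> * monom_eval \<alpha> x) * (\<Sum>\<alpha>\<in>mindices k. u \<alpha> * monom_eval \<alpha> x)"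
    by (simp add: sum_product monom_eval_add mult_ac)
  thus "0 \<le> (\<Sum>\<alpha>\<in>mindices k. \<Sum>\<beta>\<in>mindices k. u \<alpha> * u \<beta> * monom_eval (\<lambda>i. \<alpha> i + \<beta> i) x)"
    by simp
qed

lemma riesz_lincomb: "riesz p (\<lambda>\<alpha>. a * y1 \<alpha> + b * y2 \<alpha>) = a * riesz p y1 + b * riesz p y2"
  by (simp add: riesz_def sum.distrib sum_distrib_left algebra_simps)

lemma moment_psd_lincomb:
  fixes y1 y2 :: "('n::finite \<Rightarrow> nat) \<Rightarrow> real"
  assumes "moment_psd k y1" "moment_psd k y2" "0 \<le> a" "0 \<le> b"
  shows "moment_psd k (\<lambda>\<alpha>. a * y1 \<alpha> + b * y2 \<alpha>)"
  unfolding moment_psd_def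
proof
  fix u :: "('n \<Rightarrow> nat) \<Rightarrow> real"
  let ?S = "\<lambda>y. \<Sum>\<alpha>\<in>mindices k. \<Sum>\<beta>\<in>mindices k. u \<alpha> * u \<beta> * y (\<lambda>i. \<alpha> i + \<beta> i)"
  have "?S (\<lambda>\<alpha>. a * y1 \<alpha> + b * y2 \<alpha>) = a * ?S y1 + b * ?S y2"
    by (simp add: sum.distrib sum_distrib_left algebra_simps)
  moreover have "?S y1 \<ge> 0" "?S y2 \<ge> 0" using assms(1,2) unfolding moment_psd_def by blast+
  ultimately show "?S (\<lambda>\<alpha>. a * y1 \<alpha> + b * y2 \<alpha>) \<ge> 0" using assms(3,4) by simp
qed

lemma convex_V1:
  fixes f :: "'m::finite \<Rightarrow> ('n::finite) mpoly_coeffs"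
  shows "convex (V1 f I c)"
proof (rule convexI)
  fix v1 v2 :: "real^'m" and a b :: real
  assume "v1 \<in> V1 f I c" "v2 \<in> V1 f I c" and ab: "0 \<le> a" "0 \<le> b" "a + b = 1"
  then obtain y1 y2 where y1: "y1 (\<lambda>_. 0) = 1" "moment_psd (d0 f I c) y1"
      "\<forall>j\<in>I. riesz (c j) y1 \<ge> 0" "\<forall>i. v1 $ i > riesz (f i) y1"
    and y2: "y2 (\<lambda>_. 0) = 1" "moment_psd (d0 f I c) y2"
      "\<forall>j\<in>I. riesz (c j) y2 \<ge> 0" "\<forall>i. v2 $ i > riesz (f i) y2"
    unfolding V1_def by blast
  have "(a *\<^sub>R v1 + b *\<^sub>R v2) $ i > riesz (f i) (\<lambda>\<alpha>. a * y1 \<alpha> + b * y2 \<alpha>)" for i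
  proof -
    have "a * riesz (f i) y1 \<le> a * v1 $ i" "b * riesz (f i) y2 \<le> b * v2 $ i"
      using y1(4) y2(4) ab by (auto intro: mult_left_mono less_imp_le)
    moreover have "a * riesz (f i) y1 < a * v1 $ i \<or> b * riesz (f i) y2 < b * v2 $ i"
      using y1(4) y2(4) ab by (cases "a = 0") auto
    ultimately show ?thesis by (auto simp: riesz_lincomb)
  qed
  with y1 y2 ab show "a *\<^sub>R v1 + b *\<^sub>R v2 \<in> V1 f I c"
    unfolding V1_def by (auto intro!: exI[of _ "\<lambda>\<alpha>. a * y1 \<alpha> + b * y2 \<alpha>"] moment_psd_lincomb
        simp: riesz_lincomb)
qed

lemma supp_subset_mindices_d0:
  assumes "finite I" "is_poly (f i)"
  shows "{\<alpha>. f i \<alpha> \<noteq> 0} \<subseteq> mindices (2 * d0 f I c)"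
proof -
  have "pdeg (f i) \<le> dmax f" unfolding dmax_def by (rule Max_ge) auto
  moreover have "(dmax f + 1) div 2 \<le> d0 f I c"
    unfolding d0_def by (rule Max_ge) (use assms(1) in auto)
  ultimately have "pdeg (f i) \<le> 2 * d0 f I c" by linarith
  thus ?thesis using supp_subset_mindices_pdeg[OF assms(2)] mindices_mono by blast
qed

lemma supp_constraint_subset_mindices_d0:
  assumes "finite I" "j \<in> I" "is_poly (c j)"
  shows "{\<alpha>. c j \<alpha> \<noteq> 0} \<subseteq> mindices (2 * d0 f I c)"
proof -
  have "(pdeg (c j) + 1) div 2 \<le> d0 f I c"
    unfolding d0_def by (rule Max_ge) (use assms(1,2) in auto)
  hence "pdeg (c j) \<le> 2 * d0 f I c" by linarith
  thus ?thesis using supp_subset_mindices_pdeg[OF assms(3)] mindices_mono by blast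
qed

definition strict_upset :: "('m \<Rightarrow> ('n::finite) mpoly_coeffs) \<Rightarrow> (real^'n) set \<Rightarrow> (real^'m) set" where
  "strict_upset f K = {v. \<exists>x\<in>K. \<forall>i. peval (f i) x < v $ i}"

lemma V1_subset_strict_upset:
  fixes f :: "'m::finite \<Rightarrow> ('n::finite) mpoly_coeffs" and c :: "'j \<Rightarrow> 'n mpoly_coeffs"
  assumes I: "finite I" and polys: "\<forall>i. is_poly (f i)" "\<forall>j\<in>I. is_poly (c j)"
    and sos: "\<forall>i. sos_convex (f i)" "\<forall>j\<in>I. sos_convex (\<lambda>\<alpha>. - c j \<alpha>)"
  shows "V1 f I c \<subseteq> strict_upset f (feasible I c)"
proof
  fix v assume "v \<in> V1 f I c"
  then obtain y where y: "y (\<lambda>_. 0) = 1" "moment_psd (d0 f I c) y"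
      "\<forall>j\<in>I. riesz (c j) y \<ge> 0" "\<forall>i. v $ i > riesz (f i) y"
    unfolding V1_def by blast
  define x :: "real^'n" where "x = (\<chi> i. y (unit_mindex i))"
  have "peval (c j) x \<ge> 0" if "j \<in> I" for j
  proof -
    have "peval (\<lambda>\<alpha>. - c j \<alpha>) x \<le> riesz (\<lambda>\<alpha>. - c j \<alpha>) y"
      unfolding x_def
    proof (rule sos_convex_jensen[OF _ _ _ y(1,2)])
      show "is_poly (\<lambda>\<alpha>. - c j \<alpha>)" using polys(2) that by (simp add: is_poly_def)
      show "sos_convex (\<lambda>\<alpha>. - c j \<alpha>)" using sos(2) that by blast
      show "{\<alpha>. - c j \<alpha> \<noteq> 0} \<subseteq> mindices (2 * d0 f I c)"
        using supp_constraint_subset_mindices_d0[where c=c and f=f, OF I that] polys(2) that by simp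
    qed
    moreover have "riesz (c j) y \<ge> 0" using y(3) that by blast
    ultimately show ?thesis by (simp add: peval_def riesz_def sum_negf)
  qed
  moreover have "peval (f i) x < v $ i" for i
    using sos_convex_jensen[OF _ _ supp_subset_mindices_d0[where c=c, OF I] y(1,2)] polys(1) sos(1) y(4)
    unfolding x_def by (meson le_less_trans)
  ultimately show "v \<in> strict_upset f (feasible I c)"
    unfolding strict_upset_def feasible_def by blast
qed

lemma strict_upset_subset_V1:
  fixes f :: "'m::finite \<Rightarrow> ('n::finite) mpoly_coeffs" and c :: "'j \<Rightarrow> 'n mpoly_coeffs"
  shows "strict_upset f (feasible I c) \<subseteq> V1 f I c"
proof
  fix v assume "v \<in> strict_upset f (feasible I c)"
  then obtain x where "x \<in> feasible I c" "\<forall>i. peval (f i) x < v $ i"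
    unfolding strict_upset_def by blast
  thus "v \<in> V1 f I c"
    unfolding V1_def feasible_def
    by (auto intro!: exI[of _ "\<lambda>\<alpha>. monom_eval \<alpha> x"] simp: moment_psd_monom_moments riesz_monom_moments)
qed

lemma open_strict_upset:
  fixes f :: "'m::finite \<Rightarrow> ('n::finite) mpoly_coeffs"
  shows "open (strict_upset f K)"
proof -
  have "strict_upset f K = (\<Union>x\<in>K. \<Inter>i\<in>UNIV. {v. peval (f i) x < v $ i})"
    unfolding strict_upset_def by auto
  also have "open \<dots>"
    by (intro open_UN ballI open_INT open_Collect_less continuous_intros) auto
  finally show ?thesis .
qed

lemma exists_const_vec_norm_less:
  assumes "e > 0"
  shows "\<exists>\<delta>>0. norm ((\<chi> i. \<delta>) :: real^'m::finite) < e"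
proof (intro exI conjI)
  let ?\<delta> = "e / (2 * real CARD('m))"
  show "?\<delta> > 0" using assms by simp
  have "norm ((\<chi> i. ?\<delta>) :: real^'m) \<le> (\<Sum>i\<in>UNIV. \<bar>(\<chi> i. ?\<delta>) $ (i::'m)\<bar>)"
    by (rule norm_le_l1_cart)
  also have "\<dots> = e / 2" using assms by simp
  finally show "norm ((\<chi> i. ?\<delta>) :: real^'m) < e" using assms by simp
qed

lemma interior_upset:
  fixes f :: "'m::finite \<Rightarrow> ('n::finite) mpoly_coeffs"
  shows "interior (upset f K) = strict_upset f K"
proof
  have "strict_upset f K \<subseteq> upset f K"
    unfolding strict_upset_def upset_def fmap_def by (auto intro: less_imp_le)
  thus "strict_upset f K \<subseteq> interior (upset f K)"
    by (rule interior_maximal[OF _ open_strict_upset])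
next
  show "interior (upset f K) \<subseteq> strict_upset f K"
  proof
    fix v assume "v \<in> interior (upset f K)"
    then obtain e where e: "e > 0" "ball v e \<subseteq> upset f K" by (auto simp: mem_interior)
    obtain \<delta> where \<delta>: "\<delta> > 0" "norm ((\<chi> i. \<delta>) :: real^'m) < e"
      using exists_const_vec_norm_less[OF e(1)] by blast
    have "dist v (v - (\<chi> i. \<delta>)) < e" using \<delta>(2) by (simp add: dist_norm)
    hence "v - (\<chi> i. \<delta>) \<in> upset f K" using e(2) by auto
    then obtain x where x: "x \<in> K" "\<And>i. peval (f i) x \<le> v $ i - \<delta>"
      unfolding upset_def fmap_def by auto
    have "peval (f i) x < v $ i" for i using x(2)[of i] \<delta>(1) by linarith
    thus "v \<in> strict_upset f K" unfolding strict_upset_def using x(1) by blast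
  qed
qed

lemma fmap_in_closure_strict_upset:
  fixes f :: "'m::finite \<Rightarrow> ('n::finite) mpoly_coeffs"
  assumes "x \<in> K"
  shows "fmap f x \<in> closure (strict_upset f K)"
  unfolding closure_approachable
proof (intro allI impI)
  fix e :: real assume "e > 0"
  then obtain \<delta> where \<delta>: "\<delta> > 0" "norm ((\<chi> i. \<delta>) :: real^'m) < e"
    using exists_const_vec_norm_less by blast
  have "fmap f x + (\<chi> i. \<delta>) \<in> strict_upset f K"
    unfolding strict_upset_def fmap_def using assms \<delta>(1) by (auto intro!: bexI[of _ x])
  moreover have "dist (fmap f x + (\<chi> i. \<delta>)) (fmap f x) < e" using \<delta>(2) by (simp add: dist_norm)
  ultimately show "\<exists>v\<in>strict_upset f K. dist v (fmap f x) < e" by blast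
qed

lemma weakly_pareto_value_iff_not_in_strict_upset:
  assumes "x \<in> K"
  shows "weakly_pareto_value f K (fmap f x) \<longleftrightarrow> fmap f x \<notin> strict_upset f K"
  using assms
  unfolding weakly_pareto_value_def weakly_pareto_def strict_upset_def fmap_def
  by (auto simp: vec_eq_iff)

lemma frontier_closure_convex_open:
  fixes S :: "'a::euclidean_space set"
  assumes "convex S" "open S"
  shows "frontier (closure S) = closure S - S"
  using convex_interior_closure[OF assms(1)] interior_open[OF assms(2)]
  by (simp add: frontier_def)

theorem theorem3p3:
  fixes f :: "'m::finite \<Rightarrow> ('n::finite) mpoly_coeffs"
    and c :: "'j \<Rightarrow> 'n mpoly_coeffs"
    and I :: "'j set"
  assumes "finite I"
    and "\<forall>i. is_poly (f i)" and "\<forall>j\<in>I. is_poly (c j)"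
    and "interior (feasible I c) \<noteq> {}"
    and "\<forall>i. sos_convex (f i)"
    and "\<forall>j\<in>I. sos_convex (\<lambda>\<alpha>. - c j \<alpha>)"
  shows "interior (upset f (feasible I c)) = V1 f I c \<and>
         (\<forall>v\<in>fmap f ` feasible I c.
            weakly_pareto_value f (feasible I c) v \<longleftrightarrow> v \<in> frontier (closure (V1 f I c)))"
proof -
  have V1: "V1 f I c = strict_upset f (feasible I c)"
    using V1_subset_strict_upset[OF assms(1-3,5,6)] strict_upset_subset_V1 by (rule equalityI)
  have "frontier (closure (V1 f I c)) = closure (V1 f I c) - V1 f I c"
    by (rule frontier_closure_convex_open[OF convex_V1]) (simp add: V1 open_strict_upset)
  thus ?thesis
    unfolding V1 interior_upset
    using fmap_in_closure_strict_upset weakly_pareto_value_iff_not_in_strict_upset by blast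
qed

end
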